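(* Let $(G,\cdot)$ be a loop with identity $e$ and $(H,\cdot)$ a non-trivial subloop such that $(xs\cdot z)s=x(sz\cdot s)$ for all $x,z\in G$, $s\in H$. Let $(U,V,W)\in\mathrm{S_{1st}AUT}(G_H)$, $s_1=eU$ and $s_2=eV$. Then $A=UR_{s_1}^{-1}\in\mathrm{S_{1st}PAUT}(G_H)$ with first Smarandache companion $c=s_1s_2\cdot s_1$ (i.e. $(A,AR_c,AR_c)\in\mathrm{S_{1st}AUT}(G_H)$), and $$(U,V,W)=(A,AR_c,AR_c)\,(R_{s_1}^{-1},L_{s_1}R_{s_1},R_{s_1})^{-1}.$$
   Context: Juxtaposition binds more tightly than $\cdot$. Maps are written on the right and composed left to right; $xR_s=x\cdot s$, $xL_s=s\cdot x$. $SSYM(G_H)$ is the set of bijections $A$ of $G$ with $HA=H$. $\mathrm{S_{1st}AUT}(G_H)$ is the set of triples $(U,V,W)$ with $U,V,W\in SSYM(G_H)$ and $xU\cdot yV=(x\cdot y)W$ for all $x,y\in G$; triples are multiplied componentwise. $\mathrm{S_{1st}PAUT}(G_H)$ is the set of $A\in SSYM(G_H)$ for which there is $c\in H$ with $(A,AR_c,AR_c)\in\mathrm{S_{1st}AUT}(G_H)$; $c$ is called a first Smarandache companion of $A$. *)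

theory Defs
  imports Main
begin

definition loop :: "'a set \<Rightarrow> ('a \<Rightarrow> 'a \<Rightarrow> 'a) \<Rightarrow> 'a \<Rightarrow> bool" where
  "loop G m e \<longleftrightarrow> e \<in> G \<and> (\<forall>x\<in>G. \<forall>y\<in>G. m x y \<in> G)
     \<and> (\<forall>x\<in>G. m e x = x \<and> m x e = x)
     \<and> (\<forall>a\<in>G. \<forall>b\<in>G. (\<exists>!x. x \<in> G \<and> m a x = b) \<and> (\<exists>!y. y \<in> G \<and> m y a = b))"

definition subloop :: "'a set \<Rightarrow> 'a set \<Rightarrow> ('a \<Rightarrow> 'a \<Rightarrow> 'a) \<Rightarrow> 'a \<Rightarrow> bool" where
  "subloop H G m e \<longleftrightarrow> H \<subseteq> G \<and> loop H m e"

text \<open>Maps are written on the right and composed left to right: x (f ; g) = (x f) g.\<close>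
definition lcomp :: "('a \<Rightarrow> 'a) \<Rightarrow> ('a \<Rightarrow> 'a) \<Rightarrow> ('a \<Rightarrow> 'a)" where
  "lcomp f g = g \<circ> f"

definition rtr :: "('a \<Rightarrow> 'a \<Rightarrow> 'a) \<Rightarrow> 'a \<Rightarrow> 'a \<Rightarrow> 'a" where
  "rtr m s = (\<lambda>x. m x s)"

definition ltr :: "('a \<Rightarrow> 'a \<Rightarrow> 'a) \<Rightarrow> 'a \<Rightarrow> 'a \<Rightarrow> 'a" where
  "ltr m s = (\<lambda>x. m s x)"

definition SSYM :: "'a set \<Rightarrow> 'a set \<Rightarrow> ('a \<Rightarrow> 'a) set" where
  "SSYM G H = {A. bij_betw A G G \<and> A ` H = H}"

definition S1AUT :: "'a set \<Rightarrow> ('a \<Rightarrow> 'a \<Rightarrow> 'a) \<Rightarrow> 'a set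
     \<Rightarrow> (('a \<Rightarrow> 'a) \<times> ('a \<Rightarrow> 'a) \<times> ('a \<Rightarrow> 'a)) set" where
  "S1AUT G m H = {(U, V, W). U \<in> SSYM G H \<and> V \<in> SSYM G H \<and> W \<in> SSYM G H
      \<and> (\<forall>x\<in>G. \<forall>y\<in>G. m (U x) (V y) = W (m x y))}"

definition first_companion :: "'a set \<Rightarrow> ('a \<Rightarrow> 'a \<Rightarrow> 'a) \<Rightarrow> 'a set \<Rightarrow> ('a \<Rightarrow> 'a) \<Rightarrow> 'a \<Rightarrow> bool" where
  "first_companion G m H A c \<longleftrightarrow> c \<in> H \<and>
     (A, lcomp A (rtr m c), lcomp A (rtr m c)) \<in> S1AUT G m H"

definition S1PAUT :: "'a set \<Rightarrow> ('a \<Rightarrow> 'a \<Rightarrow> 'a) \<Rightarrow> 'a set \<Rightarrow> ('a \<Rightarrow> 'a) set" where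
  "S1PAUT G m H = {A. A \<in> SSYM G H \<and> (\<exists>c. first_companion G m H A c)}"

definition tmul :: "('a \<Rightarrow> 'a) \<times> ('a \<Rightarrow> 'a) \<times> ('a \<Rightarrow> 'a) \<Rightarrow> ('a \<Rightarrow> 'a) \<times> ('a \<Rightarrow> 'a) \<times> ('a \<Rightarrow> 'a)
     \<Rightarrow> ('a \<Rightarrow> 'a) \<times> ('a \<Rightarrow> 'a) \<times> ('a \<Rightarrow> 'a)" where
  "tmul T S = (case T of (P1, Q1, R1) \<Rightarrow> case S of (P2, Q2, R2) \<Rightarrow>
      (lcomp P1 P2, lcomp Q1 Q2, lcomp R1 R2))"

definition tinv :: "'a set \<Rightarrow> ('a \<Rightarrow> 'a) \<times> ('a \<Rightarrow> 'a) \<times> ('a \<Rightarrow> 'a) \<Rightarrow> ('a \<Rightarrow> 'a) \<times> ('a \<Rightarrow> 'a) \<times> ('a \<Rightarrow> 'a)" where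
  "tinv G T = (case T of (P, Q, R) \<Rightarrow> (inv_into G P, inv_into G Q, inv_into G R))"

text \<open>Equality of triples of maps of G (maps are only relevant on G).\<close>
definition teq_on :: "'a set \<Rightarrow> ('a \<Rightarrow> 'a) \<times> ('a \<Rightarrow> 'a) \<times> ('a \<Rightarrow> 'a) \<Rightarrow> ('a \<Rightarrow> 'a) \<times> ('a \<Rightarrow> 'a) \<times> ('a \<Rightarrow> 'a) \<Rightarrow> bool" where
  "teq_on G T S = (case T of (P1, Q1, R1) \<Rightarrow> case S of (P2, Q2, R2) \<Rightarrow>
      (\<forall>x\<in>G. P1 x = P2 x \<and> Q1 x = Q2 x \<and> R1 x = R2 x))"

end

theory Submission
  imports Defs
begin

text \<open>Putting \<open>x = e\<close> and \<open>y = e\<close> in \<open>xU \<cdot> yV = (x \<cdot> y)W\<close> gives \<open>W = V L\<^sub>s\<^sub>1 = U R\<^sub>s\<^sub>2\<close>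
  with \<open>s\<^sub>1 = eU\<close>, \<open>s\<^sub>2 = eV\<close>, so \<open>U = A R\<^sub>s\<^sub>1\<close> and \<open>W = A R\<^sub>s\<^sub>1 R\<^sub>s\<^sub>2\<close>.
  The identity \<open>(xs \<cdot> z)s = x(sz \<cdot> s)\<close> with \<open>s \<in> H\<close> collapses \<open>R\<^sub>s\<^sub>1 R\<^sub>s\<^sub>2 R\<^sub>s\<^sub>1\<close>
  to \<open>R\<^sub>c\<close> with \<open>c = s\<^sub>1s\<^sub>2 \<cdot> s\<^sub>1\<close>, i.e. \<open>W R\<^sub>s\<^sub>1 = A R\<^sub>c\<close>, and it turns the autotopism
  identity, multiplied on the right by \<open>s\<^sub>1\<close>, into \<open>xA \<cdot> yAR\<^sub>c = (x \<cdot> y)AR\<^sub>c\<close>.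
  The factorisation of \<open>(U, V, W)\<close> is then read off from \<open>U = A R\<^sub>s\<^sub>1\<close>,
  \<open>V L\<^sub>s\<^sub>1 R\<^sub>s\<^sub>1 = W R\<^sub>s\<^sub>1 = A R\<^sub>c\<close> and \<open>W R\<^sub>s\<^sub>1 = A R\<^sub>c\<close>.\<close>

lemma loop_closed: "loop G m e \<Longrightarrow> x \<in> G \<Longrightarrow> y \<in> G \<Longrightarrow> m x y \<in> G"
  unfolding loop_def by blast

lemma loop_identity_mem: "loop G m e \<Longrightarrow> e \<in> G"
  unfolding loop_def by blast

lemma loop_left_identity: "loop G m e \<Longrightarrow> x \<in> G \<Longrightarrow> m e x = x"
  unfolding loop_def by blast

lemma loop_right_identity: "loop G m e \<Longrightarrow> x \<in> G \<Longrightarrow> m x e = x"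
  unfolding loop_def by blast

lemma loop_right_division: "loop G m e \<Longrightarrow> a \<in> G \<Longrightarrow> b \<in> G \<Longrightarrow> \<exists>!y. y \<in> G \<and> m y a = b"
  unfolding loop_def by simp

lemma loop_left_division: "loop G m e \<Longrightarrow> a \<in> G \<Longrightarrow> b \<in> G \<Longrightarrow> \<exists>!y. y \<in> G \<and> m a y = b"
  unfolding loop_def by simp

lemma loop_rtr_bij:
  assumes "loop G m e" "s \<in> G"
  shows "bij_betw (rtr m s) G G"
proof -
  note div = loop_right_division[OF assms]
  have "inj_on (rtr m s) G"
  proof (rule inj_onI)
    fix x y assume "x \<in> G" "y \<in> G" "rtr m s x = rtr m s y"
    with div[OF loop_closed[OF assms(1) \<open>y \<in> G\<close> assms(2)]] show "x = y"
      unfolding rtr_def by blast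
  qed
  moreover have "rtr m s ` G = G"
  proof
    show "rtr m s ` G \<subseteq> G"
      using loop_closed[OF assms(1) _ assms(2)] unfolding rtr_def by blast
    show "G \<subseteq> rtr m s ` G"
      using div unfolding rtr_def by blast
  qed
  ultimately show ?thesis
    unfolding bij_betw_def by blast
qed

lemma loop_ltr_inj:
  assumes "loop G m e" "s \<in> G"
  shows "inj_on (ltr m s) G"
proof (rule inj_onI)
  fix x y assume "x \<in> G" "y \<in> G" "ltr m s x = ltr m s y"
  moreover have "\<exists>!z. z \<in> G \<and> m s z = m s y"
    using loop_left_division[OF assms] loop_closed[OF assms] \<open>y \<in> G\<close> by blast
  ultimately show "x = y"
    unfolding ltr_def by blast
qed

lemma loop_rtr_inv_cancel:
  assumes "loop G m e" "s \<in> G" "y \<in> G"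
  shows "m (inv_into G (rtr m s) y) s = y"
  using f_inv_into_f[of y "rtr m s" G] loop_rtr_bij[OF assms(1,2)] assms(3)
  unfolding bij_betw_def rtr_def by simp

lemma subloop_subset: "subloop H G m e \<Longrightarrow> H \<subseteq> G"
  unfolding subloop_def by blast

lemma subloop_loop: "subloop H G m e \<Longrightarrow> loop H m e"
  unfolding subloop_def by blast

lemma subloop_identity_mem: "subloop H G m e \<Longrightarrow> e \<in> H"
  using loop_identity_mem[OF subloop_loop] .

lemma SSYM_mem_carrier: "A \<in> SSYM G H \<Longrightarrow> x \<in> G \<Longrightarrow> A x \<in> G"
  unfolding SSYM_def bij_betw_def by blast

lemma SSYM_mem_subset: "A \<in> SSYM G H \<Longrightarrow> x \<in> H \<Longrightarrow> A x \<in> H"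
  unfolding SSYM_def by blast

lemma SSYM_lcomp:
  assumes "A \<in> SSYM G H" "B \<in> SSYM G H"
  shows "lcomp A B \<in> SSYM G H"
proof -
  have "(B \<circ> A) ` H = B ` A ` H"
    by (rule image_comp[symmetric])
  then have "(B \<circ> A) ` H = H"
    using assms unfolding SSYM_def by simp
  moreover have "bij_betw (B \<circ> A) G G"
    using assms bij_betw_trans unfolding SSYM_def by auto
  ultimately show ?thesis
    unfolding SSYM_def lcomp_def by simp
qed

lemma SSYM_inv_into:
  assumes "H \<subseteq> G" "A \<in> SSYM G H"
  shows "inv_into G A \<in> SSYM G H"
proof -
  have bij: "bij_betw A G G" and AH: "A ` H = H"
    using assms(2) unfolding SSYM_def by blast+
  have "inv_into G A ` H = inv_into G A ` A ` H"
    using AH by simp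
  also have "\<dots> = H"
    using bij assms(1) by (simp add: bij_betw_def inv_into_image_cancel)
  finally show ?thesis
    using bij_betw_inv_into[OF bij] unfolding SSYM_def by blast
qed

lemma rtr_SSYM:
  assumes "loop G m e" "subloop H G m e" "s \<in> H"
  shows "rtr m s \<in> SSYM G H"
proof -
  have "bij_betw (rtr m s) G G"
    using loop_rtr_bij[OF assms(1)] subloop_subset[OF assms(2)] assms(3) by blast
  moreover have "rtr m s ` H = H"
    using loop_rtr_bij[OF subloop_loop[OF assms(2)] assms(3)] by (simp add: bij_betw_def)
  ultimately show ?thesis
    unfolding SSYM_def by simp
qed

lemma S1AUT_SSYM:
  assumes "(U, V, W) \<in> S1AUT G m H"
  shows "U \<in> SSYM G H" "V \<in> SSYM G H" "W \<in> SSYM G H"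
  using assms unfolding S1AUT_def by simp_all

lemma S1AUT_eq_ltr:
  assumes "loop G m e" "(U, V, W) \<in> S1AUT G m H" "y \<in> G"
  shows "W y = m (U e) (V y)"
  using assms loop_identity_mem[OF assms(1)] loop_left_identity[OF assms(1,3)]
  unfolding S1AUT_def by force

lemma S1AUT_eq_rtr:
  assumes "loop G m e" "(U, V, W) \<in> S1AUT G m H" "y \<in> G"
  shows "W y = m (U y) (V e)"
  using assms loop_identity_mem[OF assms(1)] loop_right_identity[OF assms(1,3)]
  unfolding S1AUT_def by force

context
  fixes G H :: "'a set" and m :: "'a \<Rightarrow> 'a \<Rightarrow> 'a" and e :: 'a and U V W :: "'a \<Rightarrow> 'a"
  assumes loop: "loop G m e"
    and subloop: "subloop H G m e"
    and H_bol: "\<forall>x\<in>G. \<forall>z\<in>G. \<forall>s\<in>H. m (m (m x s) z) s = m x (m (m s z) s)"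
    and aut: "(U, V, W) \<in> S1AUT G m H"
begin

abbreviation "s\<^sub>1 \<equiv> U e"
abbreviation "s\<^sub>2 \<equiv> V e"
abbreviation "A \<equiv> lcomp U (inv_into G (rtr m s\<^sub>1))"
abbreviation "c \<equiv> m (m s\<^sub>1 s\<^sub>2) s\<^sub>1"

lemma s1_mem: "s\<^sub>1 \<in> H"
  using SSYM_mem_subset[OF S1AUT_SSYM(1)[OF aut] subloop_identity_mem[OF subloop]] .

lemma s2_mem: "s\<^sub>2 \<in> H"
  using SSYM_mem_subset[OF S1AUT_SSYM(2)[OF aut] subloop_identity_mem[OF subloop]] .

lemma s1_mem_carrier: "s\<^sub>1 \<in> G"
  using s1_mem subloop_subset[OF subloop] by (rule subsetD[rotated])

lemma companion_mem: "c \<in> H"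
  using loop_closed[OF subloop_loop[OF subloop] loop_closed[OF subloop_loop[OF subloop] s1_mem s2_mem] s1_mem] .

lemma A_SSYM: "A \<in> SSYM G H"
  using SSYM_lcomp[OF S1AUT_SSYM(1)[OF aut]
      SSYM_inv_into[OF subloop_subset[OF subloop] rtr_SSYM[OF loop subloop s1_mem]]] .

lemma A_rtr_s1: "x \<in> G \<Longrightarrow> m (A x) s\<^sub>1 = U x"
  unfolding lcomp_def comp_def
  using loop_rtr_inv_cancel[OF loop s1_mem_carrier SSYM_mem_carrier[OF S1AUT_SSYM(1)[OF aut]]] .

lemma A_rtr_companion:
  assumes "y \<in> G"
  shows "m (A y) c = m (W y) s\<^sub>1"
proof -
  have "s\<^sub>2 \<in> G"
    using s2_mem subloop_subset[OF subloop] by blast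
  then have "m (A y) c = m (m (m (A y) s\<^sub>1) s\<^sub>2) s\<^sub>1"
    using H_bol SSYM_mem_carrier[OF A_SSYM assms] s1_mem by simp
  also have "\<dots> = m (W y) s\<^sub>1"
    using A_rtr_s1[OF assms] S1AUT_eq_rtr[OF loop aut assms] by simp
  finally show ?thesis .
qed

lemma A_first_companion: "first_companion G m H A c"
proof -
  have "m (A x) (lcomp A (rtr m c) y) = lcomp A (rtr m c) (m x y)" if "x \<in> G" "y \<in> G" for x y
  proof -
    have "lcomp A (rtr m c) (m x y) = m (W (m x y)) s\<^sub>1"
      using A_rtr_companion[OF loop_closed[OF loop that]] by (simp add: lcomp_def rtr_def)
    also have "\<dots> = m (m (m (A x) s\<^sub>1) (V y)) s\<^sub>1"
      using aut that A_rtr_s1[OF that(1)] unfolding S1AUT_def by simp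
    also have "\<dots> = m (A x) (m (m s\<^sub>1 (V y)) s\<^sub>1)"
      using H_bol SSYM_mem_carrier[OF A_SSYM that(1)]
        SSYM_mem_carrier[OF S1AUT_SSYM(2)[OF aut] that(2)] s1_mem by simp
    also have "\<dots> = m (A x) (m (A y) c)"
      using S1AUT_eq_ltr[OF loop aut that(2)] A_rtr_companion[OF that(2)] by simp
    finally show ?thesis
      by (simp add: lcomp_def rtr_def)
  qed
  moreover have "lcomp A (rtr m c) \<in> SSYM G H"
    using SSYM_lcomp[OF A_SSYM rtr_SSYM[OF loop subloop companion_mem]] .
  ultimately show ?thesis
    unfolding first_companion_def S1AUT_def using companion_mem A_SSYM by simp
qed

lemma autotopism_factorisation:
  "teq_on G (U, V, W)
     (tmul (A, lcomp A (rtr m c), lcomp A (rtr m c))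
           (tinv G (inv_into G (rtr m s\<^sub>1), lcomp (ltr m s\<^sub>1) (rtr m s\<^sub>1), rtr m s\<^sub>1)))"
proof -
  have R_bij: "bij_betw (rtr m s\<^sub>1) G G"
    using loop_rtr_bij[OF loop s1_mem_carrier] .
  then have R_inj: "inj_on (rtr m s\<^sub>1) G"
    by (rule bij_betw_imp_inj_on)
  have "ltr m s\<^sub>1 ` G \<subseteq> G"
    using loop_closed[OF loop s1_mem_carrier] unfolding ltr_def by blast
  then have LR_inj: "inj_on (lcomp (ltr m s\<^sub>1) (rtr m s\<^sub>1)) G"
    unfolding lcomp_def
    using comp_inj_on[OF loop_ltr_inj[OF loop s1_mem_carrier] inj_on_subset[OF R_inj]] by blast
  have U_eq: "U x = rtr m s\<^sub>1 (A x)"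
    and V_eq: "V x = inv_into G (lcomp (ltr m s\<^sub>1) (rtr m s\<^sub>1)) (rtr m c (A x))"
    and W_eq: "W x = inv_into G (rtr m s\<^sub>1) (rtr m c (A x))"
    if "x \<in> G" for x
  proof -
    show "U x = rtr m s\<^sub>1 (A x)"
      using A_rtr_s1[OF that] by (simp add: rtr_def)
    have "rtr m c (A x) = lcomp (ltr m s\<^sub>1) (rtr m s\<^sub>1) (V x)"
      using A_rtr_companion[OF that] S1AUT_eq_ltr[OF loop aut that]
      by (simp add: lcomp_def ltr_def rtr_def)
    then show "V x = inv_into G (lcomp (ltr m s\<^sub>1) (rtr m s\<^sub>1)) (rtr m c (A x))"
      using inv_into_f_f[OF LR_inj SSYM_mem_carrier[OF S1AUT_SSYM(2)[OF aut] that]] by simp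
    have "rtr m c (A x) = rtr m s\<^sub>1 (W x)"
      using A_rtr_companion[OF that] by (simp add: rtr_def)
    then show "W x = inv_into G (rtr m s\<^sub>1) (rtr m c (A x))"
      using inv_into_f_f[OF R_inj SSYM_mem_carrier[OF S1AUT_SSYM(3)[OF aut] that]] by simp
  qed
  have "inv_into G (inv_into G (rtr m s\<^sub>1)) (A x) = rtr m s\<^sub>1 (A x)" if "x \<in> G" for x
    using inv_into_inv_into_eq[OF R_bij SSYM_mem_carrier[OF A_SSYM that]] .
  with U_eq V_eq W_eq show ?thesis
    unfolding teq_on_def tmul_def tinv_def by (simp add: lcomp_def)
qed

end

theorem theorem3p7:
  fixes G H :: "'a set" and m :: "'a \<Rightarrow> 'a \<Rightarrow> 'a" and e :: 'a
    and U V W :: "'a \<Rightarrow> 'a"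
  assumes "loop G m e"
    and "subloop H G m e"
    and "H \<noteq> {e}"
    and "\<forall>x\<in>G. \<forall>z\<in>G. \<forall>s\<in>H. m (m (m x s) z) s = m x (m (m s z) s)"
    and "(U, V, W) \<in> S1AUT G m H"
  shows "let s1 = U e; s2 = V e;
             A = lcomp U (inv_into G (rtr m s1));
             c = m (m s1 s2) s1
         in A \<in> S1PAUT G m H
            \<and> first_companion G m H A c
            \<and> teq_on G (U, V, W)
                 (tmul (A, lcomp A (rtr m c), lcomp A (rtr m c))
                       (tinv G (inv_into G (rtr m s1), lcomp (ltr m s1) (rtr m s1), rtr m s1)))"
proof -
  note facts = assms(1,2,4,5)
  have "first_companion G m H (lcomp U (inv_into G (rtr m (U e)))) (m (m (U e) (V e)) (U e))"
    using A_first_companion[OF facts] .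
  moreover have "lcomp U (inv_into G (rtr m (U e))) \<in> S1PAUT G m H"
    using A_SSYM[OF facts] calculation unfolding S1PAUT_def by blast
  ultimately show ?thesis
    using autotopism_factorisation[OF facts] by (simp add: Let_def)
qed

end
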